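(* Let $T$ be a tree of diameter $d$ on $n$ vertices with maximum Wiener index. Let $x$ be a special vertex of $T$ and let $T_1,T_2$ be components of $T-x$ such that each of them contains exactly one broom vertex of $T$ and $d(y,y')<d$ for all leaves $y\in V(T_1)$, $y'\in V(T_2)$. Let $y_1\in V(T_1)$, $y_2\in V(T_2)$ be leaves of $T$, $y_1'$ the broom vertex adjacent to $y_1$, $p=d(x,y_1)=d(x,y_2)$, and $t_i$ the number of leaves of $T$ in $T_i$ ($i\in\{1,2\}$). Let $T'=T_2\xrightarrow{T} y_1'$. Then $W(T)\geq W(T')$ if and only if $$t_1-1\geq \frac{p(3n+5-12t_2-10p)}{12(p+t_2-1)}.$$
   Context: All graphs are finite and simple; $d(u,v)$ denotes distance and $W(G)=\sum_{\{u,v\}\subseteq V(G)} d(u,v)$ is the Wiener index. A tree $T$ of order $n$ and diameter $d$ has maximum Wiener index if $W(T')\leq W(T)$ for every tree $T'$ of order $n$ and diameter $d$. A leaf is a vertex of degree $1$; a broom vertex of $T$ is a vertex adjacent to a leaf of $T$. A vertex $x$ of a tree $T$ of diameter $d$ is special if $\deg(x)\geq 3$ and there exist components $T_1,T_2$ of $T-x$ such that each contains exactly one broom vertex of $T$ and $d(y,y')<d$ for all leaves $y\in V(T_1)$, $y'\in V(T_2)$. For such $x,T_1,T_2$ and the broom vertex $y_1'$ of $T_1$, the tree $T_2\xrightarrow{T} y_1'$ is obtained from $T$ by deleting all vertices of $T_2$ and attaching $|V(T_2)|$ new leaves to $y_1'$. *)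

theory Defs
  imports Complex_Main
begin

definition simple_graph :: "'a set \<Rightarrow> 'a set set \<Rightarrow> bool" where
  "simple_graph V E \<longleftrightarrow> finite V \<and>
     (\<forall>e\<in>E. \<exists>u v. e = {u, v} \<and> u \<in> V \<and> v \<in> V \<and> u \<noteq> v)"

definition adj :: "'a set set \<Rightarrow> 'a \<Rightarrow> 'a \<Rightarrow> bool" where
  "adj E u v \<longleftrightarrow> {u, v} \<in> E"

fun walk :: "'a set set \<Rightarrow> 'a list \<Rightarrow> bool" where
  "walk E [] = False"
| "walk E [v] = True"
| "walk E (u # v # xs) = (adj E u v \<and> walk E (v # xs))"

definition connected_graph :: "'a set \<Rightarrow> 'a set set \<Rightarrow> bool" where
  "connected_graph V E \<longleftrightarrow> V \<noteq> {} \<and>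
     (\<forall>u\<in>V. \<forall>v\<in>V. \<exists>xs. walk E xs \<and> hd xs = u \<and> last xs = v)"

definition has_cycle :: "'a set set \<Rightarrow> bool" where
  "has_cycle E \<longleftrightarrow> (\<exists>xs. length xs \<ge> 3 \<and> distinct xs \<and> walk E xs \<and> adj E (last xs) (hd xs))"

definition tree :: "'a set \<Rightarrow> 'a set set \<Rightarrow> bool" where
  "tree V E \<longleftrightarrow> simple_graph V E \<and> connected_graph V E \<and> \<not> has_cycle E"

definition gdist :: "'a set set \<Rightarrow> 'a \<Rightarrow> 'a \<Rightarrow> nat" where
  "gdist E u v = (LEAST n. \<exists>xs. walk E xs \<and> hd xs = u \<and> last xs = v \<and> length xs = Suc n)"

definition wiener :: "'a set \<Rightarrow> 'a set set \<Rightarrow> nat" where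
  "wiener V E = (\<Sum>u\<in>V. \<Sum>v\<in>V. gdist E u v) div 2"

definition diameter :: "'a set \<Rightarrow> 'a set set \<Rightarrow> nat" where
  "diameter V E = Max {gdist E u v | u v. u \<in> V \<and> v \<in> V}"

definition max_wiener_tree :: "'a set \<Rightarrow> 'a set set \<Rightarrow> bool" where
  "max_wiener_tree V E \<longleftrightarrow> tree V E \<and>
     (\<forall>(V'::'a set) (E'::'a set set). tree V' E' \<and> card V' = card V \<and> diameter V' E' = diameter V E
        \<longrightarrow> wiener V' E' \<le> wiener V E)"

definition degree :: "'a set set \<Rightarrow> 'a \<Rightarrow> nat" where
  "degree E v = card {u. adj E v u}"

definition leaf :: "'a set \<Rightarrow> 'a set set \<Rightarrow> 'a \<Rightarrow> bool" where
  "leaf V E v \<longleftrightarrow> v \<in> V \<and> degree E v = 1"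

definition broom_vertex :: "'a set \<Rightarrow> 'a set set \<Rightarrow> 'a \<Rightarrow> bool" where
  "broom_vertex V E v \<longleftrightarrow> v \<in> V \<and> (\<exists>y. leaf V E y \<and> adj E v y)"

definition component :: "'a set \<Rightarrow> 'a set set \<Rightarrow> 'a set \<Rightarrow> bool" where
  "component V E C \<longleftrightarrow> (\<exists>u\<in>V. C = {v\<in>V. \<exists>xs. walk E xs \<and> set xs \<subseteq> V \<and> hd xs = u \<and> last xs = v})"

definition comp_minus :: "'a set \<Rightarrow> 'a set set \<Rightarrow> 'a \<Rightarrow> 'a set \<Rightarrow> bool" where
  "comp_minus V E x C \<longleftrightarrow> component (V - {x}) {e\<in>E. x \<notin> e} C"

definition special_witness :: "'a set \<Rightarrow> 'a set set \<Rightarrow> 'a \<Rightarrow> 'a set \<Rightarrow> 'a set \<Rightarrow> bool" where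
  "special_witness V E x T1 T2 \<longleftrightarrow>
     comp_minus V E x T1 \<and> comp_minus V E x T2 \<and> T1 \<noteq> T2 \<and>
     card {b\<in>T1. broom_vertex V E b} = 1 \<and> card {b\<in>T2. broom_vertex V E b} = 1 \<and>
     (\<forall>y\<in>T1. \<forall>y'\<in>T2. leaf V E y \<and> leaf V E y' \<longrightarrow> gdist E y y' < diameter V E)"

definition special_vertex :: "'a set \<Rightarrow> 'a set set \<Rightarrow> 'a \<Rightarrow> bool" where
  "special_vertex V E x \<longleftrightarrow> x \<in> V \<and> degree E x \<ge> 3 \<and> (\<exists>T1 T2. special_witness V E x T1 T2)"

text \<open>The tree T2 -> y1': delete the vertices of T2 and attach |V(T2)| new leaves to y1'.
  Up to isomorphism we reuse the (deleted) vertices of T2 as the new leaves.\<close>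
definition move_edges :: "'a set set \<Rightarrow> 'a set \<Rightarrow> 'a \<Rightarrow> 'a set set" where
  "move_edges E T2 y = {e\<in>E. e \<inter> T2 = {}} \<union> {{y, z} | z. z \<in> T2}"

end

(*
  Only distances with an endpoint in T2 change. A path leaving T2 passes through x before the move
  and through y1' after it, so for a outside T2 and z in T2 the distance d(a,x) + d(x,z) becomes
  d(a,y1') + 1, while distinct vertices of T2 end up at distance 2. A component of T - x with a
  single broom vertex b is a broom: the path from b up to the neighbour of x, plus the leaves
  hanging at b, all at depth p. Summing over these explicit shapes gives
    3 (sum of d_T - sum of d_T' over ordered pairs)
      = (p - 1) (12 (p + t2 - 1) (t1 - 1) - p (3n + 5 - 12 t2 - 10 p)),
  and p >= 2 turns this into the stated criterion.
*)

theory Submission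
  imports Defs
begin

section \<open>Walks and distances\<close>

lemma adj_commute: "adj E u v = adj E v u"
  by (simp add: adj_def insert_commute)

lemma walk_not_Nil: "walk E xs \<Longrightarrow> xs \<noteq> []"
  by (cases xs) auto

lemma walk_Cons_iff: "walk E (a # xs) \<longleftrightarrow> xs = [] \<or> adj E a (hd xs) \<and> walk E xs"
  by (cases xs) auto

lemma walk_iff_nth:
  "walk E xs \<longleftrightarrow> xs \<noteq> [] \<and> (\<forall>i. Suc i < length xs \<longrightarrow> adj E (xs ! i) (xs ! Suc i))"
proof (induction xs)
  case (Cons a xs)
  show ?case
    unfolding walk_Cons_iff Cons.IH
    by (cases xs) (auto simp: nth_Cons' less_Suc_eq_0_disj)
qed simp

lemma walk_append_iff:
  "xs \<noteq> [] \<Longrightarrow> ys \<noteq> [] \<Longrightarrow>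
   walk E (xs @ ys) \<longleftrightarrow> walk E xs \<and> walk E ys \<and> adj E (last xs) (hd ys)"
  by (induction xs rule: walk.induct) (auto simp: walk_Cons_iff)

lemma walk_rev_iff: "walk E (rev xs) \<longleftrightarrow> walk E xs"
proof (induction xs rule: walk.induct)
  case (3 E u v xs)
  have "walk E (rev (v # xs) @ [u]) \<longleftrightarrow> walk E (rev (v # xs)) \<and> adj E v u"
    by (subst walk_append_iff) (auto simp: last_rev)
  then show ?case using 3 by (auto simp: adj_commute)
qed auto

lemma walk_take: "walk E xs \<Longrightarrow> 0 < k \<Longrightarrow> walk E (take k xs)"
  by (auto simp: walk_iff_nth)

lemma walk_drop: "walk E xs \<Longrightarrow> k < length xs \<Longrightarrow> walk E (drop k xs)"
  by (auto simp: walk_iff_nth)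

lemma walk_transfer:
  "walk E xs \<Longrightarrow> (\<And>u v. adj E u v \<Longrightarrow> u \<in> set xs \<Longrightarrow> v \<in> set xs \<Longrightarrow> adj E' u v) \<Longrightarrow> walk E' xs"
  unfolding walk_iff_nth by (metis Suc_lessD nth_mem)

lemma walk_join:
  assumes "walk E xs" "walk E ys" "last xs = hd ys"
  shows "walk E (xs @ tl ys)" "hd (xs @ tl ys) = hd xs" "last (xs @ tl ys) = last ys"
    "length (xs @ tl ys) = length xs + length ys - 1"
proof -
  have ne: "xs \<noteq> []" "ys \<noteq> []" using assms walk_not_Nil by auto
  then obtain c zs where ys: "ys = c # zs" by (cases ys) auto
  show "walk E (xs @ tl ys)"
    using assms ne by (cases zs) (auto simp: ys walk_append_iff)
  show "hd (xs @ tl ys) = hd xs" "length (xs @ tl ys) = length xs + length ys - 1"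
    using ne by (auto simp: ys)
  show "last (xs @ tl ys) = last ys"
    using assms(3) ne by (cases zs) (auto simp: ys)
qed

definition reachable :: "'a set set \<Rightarrow> 'a \<Rightarrow> 'a \<Rightarrow> bool" where
  "reachable E u v \<longleftrightarrow> (\<exists>xs. walk E xs \<and> hd xs = u \<and> last xs = v)"

lemma reachable_adj: "adj E u v \<Longrightarrow> reachable E u v"
  unfolding reachable_def by (rule exI[of _ "[u, v]"]) simp

lemma reachable_trans: "reachable E u v \<Longrightarrow> reachable E v w \<Longrightarrow> reachable E u w"
  unfolding reachable_def by (metis walk_join(1-3))

lemma gdist_le_length: "walk E xs \<Longrightarrow> hd xs = u \<Longrightarrow> last xs = v \<Longrightarrow> gdist E u v \<le> length xs - 1"
  unfolding gdist_def by (rule Least_le) (use walk_not_Nil in fastforce)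

lemma shortest_walk_distinct:
  assumes "walk E xs" "length xs = Suc (gdist E (hd xs) (last xs))"
  shows "distinct xs"
proof (rule ccontr)
  assume "\<not> distinct xs"
  then obtain a v b c where xs: "xs = a @ [v] @ b @ [v] @ c" using not_distinct_decomp by blast
  have "walk E (a @ [v])"
    using walk_take[OF assms(1), of "length a + 1"] by (simp add: xs)
  moreover have "walk E (v # c)"
    using walk_drop[OF assms(1), of "length a + length b + 1"] by (simp add: xs)
  ultimately have "walk E (a @ [v] @ c)"
    by (cases c) (auto simp: walk_append_iff[of "a @ [v]" "_ # _", simplified])
  then have "gdist E (hd xs) (last xs) \<le> length (a @ [v] @ c) - 1"
    by (rule gdist_le_length) (auto simp: xs hd_append)
  then show False using assms(2) by (simp add: xs)
qed

lemma shortest_walk_exists: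
  assumes "reachable E u v"
  obtains xs where "walk E xs" "hd xs = u" "last xs = v" "length xs = Suc (gdist E u v)" "distinct xs"
proof -
  obtain xs where "walk E xs" "hd xs = u" "last xs = v" using assms reachable_def by metis
  then have "\<exists>n xs. walk E xs \<and> hd xs = u \<and> last xs = v \<and> length xs = Suc n"
    using walk_not_Nil by (metis Suc_pred length_greater_0_conv)
  then have "\<exists>xs. walk E xs \<and> hd xs = u \<and> last xs = v \<and> length xs = Suc (gdist E u v)"
    unfolding gdist_def by (rule LeastI_ex)
  then show ?thesis using that shortest_walk_distinct by metis
qed

lemma gdist_commute: "gdist E u v = gdist E v u"
proof -
  have "\<And>n. (\<exists>xs. walk E xs \<and> hd xs = u \<and> last xs = v \<and> length xs = Suc n) =
            (\<exists>xs. walk E xs \<and> hd xs = v \<and> last xs = u \<and> length xs = Suc n)"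
    by (metis walk_rev_iff hd_rev last_rev length_rev)
  then show ?thesis unfolding gdist_def by simp
qed

lemma gdist_triangle:
  assumes "reachable E u v" "reachable E v w"
  shows "gdist E u w \<le> gdist E u v + gdist E v w"
proof -
  obtain xs where xs: "walk E xs" "hd xs = u" "last xs = v" "length xs = Suc (gdist E u v)"
    using shortest_walk_exists[OF assms(1)] by blast
  obtain ys where ys: "walk E ys" "hd ys = v" "last ys = w" "length ys = Suc (gdist E v w)"
    using shortest_walk_exists[OF assms(2)] by blast
  show ?thesis
    using gdist_le_length[OF walk_join(1)[OF xs(1) ys(1)]] walk_join(2-4)[OF xs(1) ys(1)] xs ys
    by simp
qed

lemma gdist_self [simp]: "gdist E u u = 0"
  using gdist_le_length[of E "[u]" u u] by simp

lemma gdist_adj_le: "adj E u v \<Longrightarrow> gdist E u v \<le> 1"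
  using gdist_le_length[of E "[u, v]" u v] by simp

lemma gdist_eq_0D: "reachable E u v \<Longrightarrow> gdist E u v = 0 \<Longrightarrow> u = v"
  by (erule shortest_walk_exists) (auto simp: length_Suc_conv)

lemma gdist_eq_1D: "reachable E u v \<Longrightarrow> gdist E u v = 1 \<Longrightarrow> adj E u v"
  by (erule shortest_walk_exists) (auto simp: length_Suc_conv)

lemma gdist_adj: "adj E u v \<Longrightarrow> u \<noteq> v \<Longrightarrow> gdist E u v = 1"
  using gdist_adj_le[of E u v] gdist_eq_0D[OF reachable_adj, of E u v] by linarith

lemma gdist_common_neighbour:
  assumes "adj E u w" "adj E w v" "u \<noteq> v" "\<not> adj E u v"
  shows "gdist E u v = 2"
proof -
  have w: "walk E [u, w, v]" using assms by simp
  then have r: "reachable E u v" unfolding reachable_def by fastforce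
  have "gdist E u v \<le> 2" using gdist_le_length[OF w, of u v] by simp
  then show ?thesis using gdist_eq_0D[OF r] gdist_eq_1D[OF r] assms(3,4) by linarith
qed

lemma gdist_adj_triangle: "reachable E s u \<Longrightarrow> adj E u v \<Longrightarrow> gdist E s v \<le> gdist E s u + 1"
  using gdist_triangle[of E s u v] gdist_adj_le[of E u v] reachable_adj[of E u v] by linarith

section \<open>Acyclic graphs and cut vertices\<close>

lemma has_cycle_if_fork:
  assumes w1: "walk E (a # xs)" and d1: "distinct (a # xs)"
    and w2: "walk E (a # ys)" and d2: "distinct (a # ys)"
    and ne: "xs \<noteq> []" "ys \<noteq> []" and last_eq: "last xs = last ys" and hd_neq: "hd xs \<noteq> hd ys"
  shows "has_cycle E"
proof -
  have wx: "walk E xs" and wy: "walk E ys" and a: "adj E a (hd xs)" "adj E a (hd ys)"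
    using w1 w2 ne walk_Cons_iff by metis+
  have "\<exists>z\<in>set xs. z \<in> set ys" using ne last_eq by (metis last_in_set)
  then obtain P m Q where xs: "xs = P @ m # Q" and m: "m \<in> set ys" and P: "\<forall>z\<in>set P. z \<notin> set ys"
    using split_list_first_prop[of xs "\<lambda>z. z \<in> set ys"] by blast
  obtain U Z where ys: "ys = U @ m # Z" using m split_list by metis
  let ?c = "a # P @ m # rev U"
  have wP: "walk E (P @ [m])" using walk_take[OF wx, of "length P + 1"] by (simp add: xs)
  have wU: "walk E (m # rev U)"
    using walk_take[OF wy, of "length U + 1"] walk_rev_iff[of E "U @ [m]"] by (simp add: ys)
  have "walk E ((P @ [m]) @ tl (m # rev U))" using walk_join(1)[OF wP wU] by simp
  then have "walk E ?c" using a(1) walk_Cons_iff[of E a "P @ m # rev U"] by (cases P) (auto simp: xs)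
  moreover have "adj E (last ?c) (hd ?c)" using a(2) adj_commute[of E a "hd ys"] by (cases U) (auto simp: ys)
  moreover have "distinct ?c" using d1 d2 P by (auto simp: xs ys)
  moreover have "length ?c \<ge> 3" using hd_neq by (cases P; cases U) (auto simp: xs ys)
  ultimately show ?thesis unfolding has_cycle_def by blast
qed

lemma acyclic_path_unique:
  assumes "\<not> has_cycle E" "walk E xs" "distinct xs" "walk E ys" "distinct ys"
    "hd xs = hd ys" "last xs = last ys"
  shows "xs = ys"
  using assms(2-)
proof (induction xs arbitrary: ys)
  case (Cons a xs)
  obtain ys' where ys: "ys = a # ys'" using Cons.prems walk_not_Nil by (cases ys) auto
  consider "xs = []" | "ys' = []" | "xs \<noteq> []" "ys' \<noteq> []" by blast
  then show ?case
  proof cases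
    case 1
    then show ?thesis using Cons.prems ys by (cases ys') (auto simp: last_in_set split: if_splits)
  next
    case 2
    then show ?thesis using Cons.prems ys by (cases xs) (auto simp: last_in_set split: if_splits)
  next
    case 3
    have "hd xs = hd ys'"
      using has_cycle_if_fork[of E a xs ys'] assms(1) Cons.prems ys 3 by auto
    moreover have "walk E xs" "walk E ys'" using Cons.prems ys 3 walk_Cons_iff by metis+
    ultimately show ?thesis using Cons.IH[of ys'] Cons.prems ys 3 by simp
  qed
qed simp

lemma walk_enters_through:
  assumes "walk E xs" "hd xs \<notin> S" "i < length xs" "xs ! i \<in> S"
    and cut: "\<And>u v. adj E u v \<Longrightarrow> u \<in> S \<Longrightarrow> v \<notin> S \<Longrightarrow> v = c"
  shows "\<exists>j<i. xs ! j = c"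
  using assms(3,4)
proof (induction i)
  case 0
  then show ?case using assms(1,2) walk_not_Nil by (metis hd_conv_nth)
next
  case (Suc i)
  have "adj E (xs ! Suc i) (xs ! i)" using assms(1) Suc.prems walk_iff_nth adj_commute by metis
  then show ?case using Suc cut by (metis Suc_lessD less_SucI lessI)
qed

lemma gdist_through_cut_vertex:
  assumes "reachable E a z" "a \<notin> S" "z \<in> S"
    and cut: "\<And>u v. adj E u v \<Longrightarrow> u \<in> S \<Longrightarrow> v \<notin> S \<Longrightarrow> v = c"
  shows "gdist E a z = gdist E a c + gdist E c z"
proof -
  obtain g where g: "walk E g" "hd g = a" "last g = z" "length g = Suc (gdist E a z)"
    using shortest_walk_exists[OF assms(1)] by blast
  have "g ! (length g - 1) = z" using g(3) last_conv_nth[of g] walk_not_Nil[OF g(1)] by simp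
  then obtain j where j: "j < length g - 1" "g ! j = c"
    using walk_enters_through[OF g(1), of S "length g - 1" c] g assms(2,3) cut by auto
  have w1: "walk E (take (Suc j) g)" "hd (take (Suc j) g) = a" "last (take (Suc j) g) = c"
    using walk_take[OF g(1), of "Suc j"] hd_take[of "Suc j" g] g(2) j
    by (simp_all add: take_Suc_conv_app_nth del: hd_take)
  have w2: "walk E (drop j g)" "hd (drop j g) = c" "last (drop j g) = z"
    using walk_drop[OF g(1)] g(3) j by (auto simp: hd_drop_conv_nth)
  have "gdist E a c + gdist E c z \<le> gdist E a z"
    using gdist_le_length[OF w1] gdist_le_length[OF w2] j g(4) by simp
  moreover have "gdist E a z \<le> gdist E a c + gdist E c z"
    using w1 w2 reachable_def by (metis gdist_triangle)
  ultimately show ?thesis by simp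
qed

lemma distinct_walk_avoids:
  assumes w: "walk E xs" and d: "distinct xs" and "hd xs \<notin> S" "last xs \<notin> S"
    and cut: "\<And>u v. adj E u v \<Longrightarrow> u \<in> S \<Longrightarrow> v \<notin> S \<Longrightarrow> v = c"
  shows "set xs \<inter> S = {}"
proof (rule ccontr)
  \<comment> \<open>entering S and leaving it again would pass through c twice\<close>
  assume "set xs \<inter> S \<noteq> {}"
  then obtain i where i: "i < length xs" "xs ! i \<in> S" by (metis disjoint_iff in_set_conv_nth)
  have "\<exists>j<i. xs ! j = c" by (rule walk_enters_through[OF w assms(3) i]) (rule cut)
  then obtain j where j: "j < i" "xs ! j = c" by blast
  have r: "walk E (rev xs)" "hd (rev xs) \<notin> S" "length xs - Suc i < length (rev xs)"
    "rev xs ! (length xs - Suc i) \<in> S"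
    using w walk_rev_iff assms(4) i walk_not_Nil by (auto simp: hd_rev rev_nth)
  have "\<exists>k < length xs - Suc i. rev xs ! k = c" by (rule walk_enters_through[OF r]) (rule cut)
  then obtain k where k: "k < length xs - Suc i" "rev xs ! k = c" by blast
  have "xs ! (length xs - Suc k) = c" "length xs - Suc k \<noteq> j" "length xs - Suc k < length xs"
    using k j by (auto simp: rev_nth)
  then show False using d j i by (metis nth_eq_iff_index_eq order.strict_trans)
qed

lemma double_sum_lessThan_int: "2 * (\<Sum>k<m. int k) = int m * (int m - 1)"
  by (induction m) (auto simp: algebra_simps)

lemma sum_sum_abs_diff_lessThan:
  "3 * (\<Sum>i<m. \<Sum>j<m. \<bar>int i - int j\<bar>) = (int m - 1) * int m * (int m + 1)"
proof (induction m)
  case (Suc m)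
  have "(\<Sum>i<Suc m. \<Sum>j<Suc m. \<bar>int i - int j\<bar>) =
        (\<Sum>i<m. \<Sum>j<m. \<bar>int i - int j\<bar>) + (\<Sum>i<m. int m - int i) + (\<Sum>j<m. int m - int j)"
    by (simp add: sum.distrib abs_if)
  also have "\<dots> = (\<Sum>i<m. \<Sum>j<m. \<bar>int i - int j\<bar>) + 2 * (int m * int m - (\<Sum>k<m. int k))"
    by (simp add: sum_subtractf)
  finally show ?case using Suc double_sum_lessThan_int[of m] by (simp add: algebra_simps)
qed simp

lemma sum_sum_off_diagonal:
  assumes "finite S"
  shows "(\<Sum>u\<in>S. \<Sum>v\<in>S. if u = v then 0 else c) = (c :: int) * int (card S) * (int (card S) - 1)"
proof -
  have "(\<Sum>v\<in>S. if u = v then 0 else c) = c * int (card S) - c" if "u \<in> S" for u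
  proof -
    have "(\<Sum>v\<in>S. if u = v then 0 else c) = (\<Sum>v\<in>S. c - (if v = u then c else 0))"
      by (rule sum.cong) auto
    then show ?thesis using assms that by (simp add: sum_subtractf)
  qed
  then have "(\<Sum>u\<in>S. \<Sum>v\<in>S. if u = v then 0 else c) = (\<Sum>u\<in>S. c * int (card S) - c)"
    by (rule sum.cong[OF refl])
  then show ?thesis by (simp add: algebra_simps)
qed

lemma sum_sum_even:
  assumes "finite S" "\<And>u v. f u v = f v u" "\<And>u. f u u = 0"
  shows "even (\<Sum>u\<in>S. \<Sum>v\<in>S. (f u v :: nat))"
  using assms(1)
proof (induction S rule: finite_induct)
  case (insert a F)
  have "(\<Sum>u\<in>insert a F. \<Sum>v\<in>insert a F. f u v) = 2 * (\<Sum>v\<in>F. f a v) + (\<Sum>u\<in>F. \<Sum>v\<in>F. f u v)"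
    using insert assms(2,3) by (simp add: sum.distrib)
  then show ?case using insert.IH by simp
qed simp

lemma sum_sum_Un_disjoint:
  assumes "finite A" "finite B" "A \<inter> B = {}"
  shows "(\<Sum>u\<in>A \<union> B. \<Sum>v\<in>A \<union> B. f u v) =
    (\<Sum>u\<in>A. \<Sum>v\<in>A. f u v) + (\<Sum>u\<in>A. \<Sum>v\<in>B. f u v) + (\<Sum>u\<in>B. \<Sum>v\<in>A. f u v) + (\<Sum>u\<in>B. \<Sum>v\<in>B. f u v)"
  using assms by (simp add: sum.union_disjoint sum.distrib add_ac)

section \<open>Trees rooted at a vertex\<close>

locale rooted_tree =
  fixes V :: "'a set" and E :: "'a set set" and x :: 'a
  assumes tree: "tree V E" and root_in_V: "x \<in> V"
begin

definition depth :: "'a \<Rightarrow> nat" where "depth v = gdist E x v"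

lemma finite_V: "finite V" and acyclic: "\<not> has_cycle E"
  using tree unfolding tree_def simple_graph_def by auto

lemma adjD: "adj E u v \<Longrightarrow> u \<in> V \<and> v \<in> V \<and> u \<noteq> v"
  using tree unfolding tree_def simple_graph_def adj_def by (metis doubleton_eq_iff)

lemma reachable_in_V: "u \<in> V \<Longrightarrow> v \<in> V \<Longrightarrow> reachable E u v"
  using tree unfolding tree_def connected_graph_def reachable_def by blast

lemma depth_root [simp]: "depth x = 0"
  by (simp add: depth_def)

lemma depth_eq_0D: "v \<in> V \<Longrightarrow> depth v = 0 \<Longrightarrow> v = x"
  using gdist_eq_0D reachable_in_V root_in_V unfolding depth_def by metis

lemma depth_adj_le: "adj E u v \<Longrightarrow> depth v \<le> depth u + 1"
  using gdist_adj_triangle reachable_in_V root_in_V adjD unfolding depth_def by metis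

lemma depth_walk_nth_le: "walk E xs \<Longrightarrow> hd xs = x \<Longrightarrow> i < length xs \<Longrightarrow> depth (xs ! i) \<le> i"
  using gdist_le_length[of E "take (Suc i) xs" x "xs ! i"] walk_take[of E xs "Suc i"]
    hd_take[of "Suc i" xs]
  unfolding depth_def by (simp add: take_Suc_conv_app_nth del: hd_take)

lemma shortest_root_walk:
  assumes "v \<in> V"
  obtains g where "walk E g" "hd g = x" "last g = v" "length g = Suc (depth v)" "distinct g"
  using that shortest_walk_exists[OF reachable_in_V[OF root_in_V assms]] unfolding depth_def by blast

lemma lower_neighbour_exists:
  assumes "v \<in> V" "v \<noteq> x"
  obtains u where "adj E v u" "depth u + 1 = depth v"
proof -
  obtain g where g: "walk E g" "hd g = x" "last g = v" "length g = Suc (depth v)"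
    using shortest_root_walk[OF assms(1)] by blast
  have "depth v \<noteq> 0" using depth_eq_0D assms by blast
  then obtain k where k: "depth v = Suc k" by (cases "depth v") auto
  have "adj E (g ! k) (g ! Suc k)" using g(1,4) k by (simp add: walk_iff_nth)
  moreover have "g ! Suc k = v" using g(3,4) last_conv_nth[of g] walk_not_Nil[OF g(1)] k by simp
  ultimately have a: "adj E (g ! k) v" by simp
  then have "depth (g ! k) + 1 = depth v"
    using depth_walk_nth_le[OF g(1,2), of k] depth_adj_le[OF a] g(4) k by simp
  then show ?thesis using that a adj_commute by metis
qed

lemma lower_neighbour_unique:
  assumes a1: "adj E v u1" and a2: "adj E v u2" and "depth u1 \<le> depth v" "depth u2 \<le> depth v"
  shows "u1 = u2"
proof -
  \<comment> \<open>two lower neighbours would give two distinct paths from the root to v\<close>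
  have extend: "\<exists>g. walk E (g @ [v]) \<and> distinct (g @ [v]) \<and> hd (g @ [v]) = x \<and> last g = u"
    if "adj E v u" "depth u \<le> depth v" for u
  proof -
    have uV: "u \<in> V" "u \<noteq> v" using adjD that(1) by auto
    obtain g where g: "walk E g" "hd g = x" "last g = u" "length g = Suc (depth u)" "distinct g"
      using shortest_root_walk[OF uV(1)] by blast
    have "v \<notin> set g"
    proof
      assume "v \<in> set g"
      then obtain i where i: "i < length g" "g ! i = v" by (metis in_set_conv_nth)
      then have "i = length g - 1" using depth_walk_nth_le[OF g(1,2) i(1)] g(4) that(2) by simp
      then show False using g(3) i uV walk_not_Nil[OF g(1)] last_conv_nth[of g] by simp
    qed
    moreover have "walk E (g @ [v])"
      using g walk_not_Nil[OF g(1)] that(1) adj_commute walk_append_iff[of g "[v]" E] by fastforce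
    ultimately show ?thesis using g walk_not_Nil[OF g(1)] by auto
  qed
  obtain g1 g2 where "walk E (g1 @ [v])" "distinct (g1 @ [v])" "hd (g1 @ [v]) = x" "last g1 = u1"
    "walk E (g2 @ [v])" "distinct (g2 @ [v])" "hd (g2 @ [v]) = x" "last g2 = u2"
    using extend assms by metis
  then show ?thesis using acyclic_path_unique[OF acyclic, of "g1 @ [v]" "g2 @ [v]"] by auto
qed

lemma depth_adj: "adj E u v \<Longrightarrow> depth v = depth u + 1 \<or> depth u = depth v + 1"
proof -
  assume a: "adj E u v"
  have "depth u \<noteq> depth v"
  proof
    assume eq: "depth u = depth v"
    have V: "u \<in> V" "v \<in> V" "u \<noteq> v" using adjD a by auto
    then have "v \<noteq> x" using eq depth_eq_0D by force
    then obtain w where "adj E v w" "depth w + 1 = depth v" using lower_neighbour_exists V by blast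
    then show False using lower_neighbour_unique[of v u w] a adj_commute[of E u v] eq by simp
  qed
  moreover have "depth u \<le> depth v + 1" using depth_adj_le[of v u] a adj_commute[of E u v] by simp
  ultimately show ?thesis using depth_adj_le[OF a] by linarith
qed

definition parent :: "'a \<Rightarrow> 'a" where
  "parent v = (THE u. adj E v u \<and> depth u + 1 = depth v)"

lemma parent:
  assumes "v \<in> V" "v \<noteq> x"
  shows "adj E v (parent v)" "depth (parent v) + 1 = depth v"
proof -
  obtain u where u: "adj E v u" "depth u + 1 = depth v" using lower_neighbour_exists assms by blast
  have "parent v = u" unfolding parent_def
  proof (rule the_equality)
    show "w = u" if "adj E v w \<and> depth w + 1 = depth v" for w
      using lower_neighbour_unique[of v w u] that u by simp
  qed (use u in simp)
  then show "adj E v (parent v)" "depth (parent v) + 1 = depth v" using u by auto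
qed

lemma parent_eqI:
  assumes "adj E v u" "depth v = depth u + 1"
  shows "parent v = u"
proof -
  have "v \<in> V" "v \<noteq> x" using adjD[OF assms(1)] assms(2) by auto
  from parent[OF this] show ?thesis
    by (intro lower_neighbour_unique[of v "parent v" u]) (use assms in auto)
qed

definition ancestor :: "nat \<Rightarrow> 'a \<Rightarrow> 'a" where "ancestor k v = (parent ^^ k) v"

lemma ancestor_0 [simp]: "ancestor 0 v = v"
  by (simp add: ancestor_def)

lemma ancestor_Suc: "ancestor (Suc k) v = parent (ancestor k v)"
  by (simp add: ancestor_def)

lemma ancestor_Suc_parent: "ancestor (Suc k) v = ancestor k (parent v)"
  by (simp only: ancestor_def funpow_Suc_right comp_def)

lemma ancestor_add: "ancestor (i + j) v = ancestor i (ancestor j v)"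
  by (simp add: ancestor_def funpow_add)

lemma ancestor_in_V_depth:
  "v \<in> V \<Longrightarrow> k \<le> depth v \<Longrightarrow> ancestor k v \<in> V \<and> depth (ancestor k v) + k = depth v"
proof (induction k)
  case (Suc k)
  then have "ancestor k v \<in> V" "depth (ancestor k v) + k = depth v" by auto
  moreover from this have "ancestor k v \<noteq> x" using Suc.prems by auto
  ultimately show ?case using parent[of "ancestor k v"] adjD by (auto simp: ancestor_Suc)
qed simp

lemma adj_ancestor_Suc:
  assumes "v \<in> V" "Suc k \<le> depth v"
  shows "adj E (ancestor k v) (ancestor (Suc k) v)"
proof -
  have "ancestor k v \<in> V" "ancestor k v \<noteq> x"
    using ancestor_in_V_depth[OF assms(1), of k] assms(2) by auto
  then show ?thesis using parent(1) by (simp add: ancestor_Suc)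
qed

lemma gdist_ancestor:
  assumes "v \<in> V" "k \<le> depth v"
  shows "gdist E v (ancestor k v) = k"
proof -
  have le: "gdist E v (ancestor j v) \<le> j" if "j \<le> depth v" for j
    using that
  proof (induction j)
    case (Suc j)
    have "ancestor j v \<in> V" using ancestor_in_V_depth[OF assms(1), of j] Suc.prems by simp
    then have "gdist E v (ancestor (Suc j) v) \<le> gdist E v (ancestor j v) + 1"
      using gdist_adj_triangle[OF reachable_in_V[OF assms(1)] adj_ancestor_Suc[OF assms(1) Suc.prems]]
      by blast
    then show ?case using Suc by simp
  qed simp
  have A: "ancestor k v \<in> V" "depth (ancestor k v) + k = depth v"
    using ancestor_in_V_depth assms by auto
  have "depth v \<le> depth (ancestor k v) + gdist E (ancestor k v) v"
    unfolding depth_def by (rule gdist_triangle) (use reachable_in_V root_in_V A assms in auto)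
  then show ?thesis using le[OF assms(2)] A gdist_commute[of E v] by fastforce
qed

lemma gdist_ancestors:
  assumes "v \<in> V" "i \<le> depth v" "j \<le> depth v"
  shows "int (gdist E (ancestor i v) (ancestor j v)) = \<bar>int i - int j\<bar>"
proof -
  have "gdist E (ancestor i v) (ancestor j v) = j - i" if "i \<le> j" "j \<le> depth v" for i j
  proof -
    have "ancestor i v \<in> V" "j - i \<le> depth (ancestor i v)"
      using ancestor_in_V_depth[OF assms(1), of i] that by auto
    then show ?thesis using gdist_ancestor ancestor_add[of "j - i" i v] that by simp
  qed
  then show ?thesis
    using assms gdist_commute[of E "ancestor i v" "ancestor j v"] by (cases "i \<le> j") auto
qed

lemma leaf_neighbours: "leaf V E v \<Longrightarrow> adj E v u \<Longrightarrow> {w. adj E v w} = {u}"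
  unfolding leaf_def degree_def by (metis card_1_singletonE mem_Collect_eq singletonD)

lemma leafI: "v \<in> V \<Longrightarrow> {w. adj E v w} = {u} \<Longrightarrow> leaf V E v"
  by (simp add: leaf_def degree_def)

lemma not_leaf_if_two_neighbours: "adj E v u1 \<Longrightarrow> adj E v u2 \<Longrightarrow> u1 \<noteq> u2 \<Longrightarrow> \<not> leaf V E v"
  using leaf_neighbours by blast

lemma exists_leaf_descendant:
  assumes "v \<in> V" "v \<noteq> x"
  obtains w m where "leaf V E w" "depth w = depth v + m" "ancestor m w = v"
proof -
  define D where "D = {w \<in> V. depth v \<le> depth w \<and> ancestor (depth w - depth v) w = v}"
  have fin: "finite (depth ` D)" "depth ` D \<noteq> {}" using finite_V assms(1) by (auto simp: D_def)
  obtain w where wD: "w \<in> D" and w_max: "depth w = Max (depth ` D)" using Max_in[OF fin] by auto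
  have deepest: "depth u \<le> depth w" if "u \<in> D" for u using Max_ge[OF fin(1)] that w_max by simp
  have wV: "w \<in> V" and w: "depth v \<le> depth w" "ancestor (depth w - depth v) w = v"
    using wD by (auto simp: D_def)
  have "w \<noteq> x" using w assms depth_eq_0D by force
  \<comment> \<open>a neighbour below the deepest descendant w would be deeper still\<close>
  have "u = parent w" if u: "adj E w u" for u
  proof (cases "depth u = depth w + 1")
    case True
    then have "parent u = w" using parent_eqI u adj_commute by metis
    then have "ancestor (depth u - depth v) u = v"
      using True w ancestor_Suc_parent[of "depth w - depth v" u] by (simp add: Suc_diff_le)
    then have "u \<in> D" using adjD u True w by (simp add: D_def)
    then show ?thesis using deepest True by fastforce
  qed (use parent_eqI depth_adj u in metis)
  then have "leaf V E w" using leafI[OF wV] parent[OF wV \<open>w \<noteq> x\<close>] by blast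
  then show ?thesis using that w by (metis le_add_diff_inverse)
qed

section \<open>Components of the tree minus its root\<close>

lemma comp_minus_subset: "comp_minus V E x C \<Longrightarrow> C \<subseteq> V - {x}"
  unfolding comp_minus_def component_def by auto

lemma comp_minus_adj_closed:
  assumes C: "comp_minus V E x C" and "u \<in> C" "adj E u w" "w \<noteq> x"
  shows "w \<in> C"
proof -
  let ?E = "{e\<in>E. x \<notin> e}"
  obtain u0 where C_eq: "C = {v\<in>V - {x}. \<exists>xs. walk ?E xs \<and> set xs \<subseteq> V - {x} \<and> hd xs = u0 \<and> last xs = v}"
    using C unfolding comp_minus_def component_def by blast
  obtain xs where xs: "walk ?E xs" "set xs \<subseteq> V - {x}" "hd xs = u0" "last xs = u"
    using assms(2) C_eq by blast
  have "adj ?E u w" using assms(2-4) C_eq by (auto simp: adj_def)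
  then have "walk ?E (xs @ [w])" using xs walk_append_iff[of xs "[w]"] walk_not_Nil by fastforce
  moreover have "set (xs @ [w]) \<subseteq> V - {x}" "hd (xs @ [w]) = u0"
    using xs adjD[OF assms(3)] assms(4) walk_not_Nil[OF xs(1)] by auto
  ultimately show ?thesis using C_eq adjD[OF assms(3)] assms(4) by fastforce
qed

lemma comp_minus_adj_iff:
  "comp_minus V E x C \<Longrightarrow> adj E u w \<Longrightarrow> u \<noteq> x \<Longrightarrow> w \<noteq> x \<Longrightarrow> u \<in> C \<longleftrightarrow> w \<in> C"
  using comp_minus_adj_closed[of C u w] comp_minus_adj_closed[of C w u] adj_commute[of E u w] by blast

lemma comp_minus_connected:
  assumes C: "comp_minus V E x C" and "u \<in> C" "v \<in> C"
  obtains ys where "walk E ys" "hd ys = u" "last ys = v" "x \<notin> set ys"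
proof -
  let ?E = "{e\<in>E. x \<notin> e}"
  obtain u0 where C_eq: "C = {v\<in>V - {x}. \<exists>xs. walk ?E xs \<and> set xs \<subseteq> V - {x} \<and> hd xs = u0 \<and> last xs = v}"
    using C unfolding comp_minus_def component_def by blast
  obtain xs where xs: "walk ?E xs" "set xs \<subseteq> V - {x}" "hd xs = u0" "last xs = u"
    using assms(2) C_eq by blast
  obtain zs where zs: "walk ?E zs" "set zs \<subseteq> V - {x}" "hd zs = u0" "last zs = v"
    using assms(3) C_eq by blast
  have to_E: "walk ?E ys \<Longrightarrow> walk E ys" for ys
    by (erule walk_transfer) (auto simp: adj_def)
  have w: "walk E (rev xs)" using to_E[OF xs(1)] walk_rev_iff by metis
  have ne: "xs \<noteq> []" "zs \<noteq> []" using xs zs walk_not_Nil by auto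
  have "x \<notin> set (rev xs @ tl zs)" using xs(2) zs(2) ne by (auto dest: list.set_sel(2))
  then show ?thesis
    using that walk_join[OF w to_E[OF zs(1)]] xs zs ne by (simp add: last_rev hd_rev)
qed

lemma comp_minus_walk_closed:
  assumes C: "comp_minus V E x C" and w: "walk E ys" and "hd ys \<in> C" "x \<notin> set ys"
  shows "set ys \<subseteq> C"
proof -
  have "ys ! i \<in> C" if "i < length ys" for i
    using that
  proof (induction i)
    case 0
    then show ?case using assms(3) by (simp add: hd_conv_nth)
  next
    case (Suc i)
    have "adj E (ys ! i) (ys ! Suc i)" using w Suc.prems by (simp add: walk_iff_nth)
    moreover have "ys ! Suc i \<noteq> x" using assms(4) Suc.prems nth_mem by metis
    ultimately show ?case using comp_minus_adj_closed[OF C] Suc by simp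
  qed
  then show ?thesis by (metis in_set_conv_nth subsetI)
qed

lemma comp_minus_disjoint:
  assumes C1: "comp_minus V E x C1" and C2: "comp_minus V E x C2" and "C1 \<noteq> C2"
  shows "C1 \<inter> C2 = {}"
proof -
  have sub: "Cb \<subseteq> Ca" if Ca: "comp_minus V E x Ca" and Cb: "comp_minus V E x Cb"
    and z: "z \<in> Ca" "z \<in> Cb" for Ca Cb z
  proof
    fix v assume "v \<in> Cb"
    then obtain ys where ys: "walk E ys" "hd ys = z" "last ys = v" "x \<notin> set ys"
      using comp_minus_connected[OF Cb z(2)] by blast
    then have "set ys \<subseteq> Ca" using comp_minus_walk_closed[OF Ca ys(1)] z(1) by simp
    then show "v \<in> Ca" using ys(1,3) walk_not_Nil last_in_set by blast
  qed
  show ?thesis using sub[OF C1 C2] sub[OF C2 C1] assms(3) by blast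
qed

lemma comp_minus_eq_singleton:
  assumes C: "comp_minus V E x C" and "u \<in> C" "{w. adj E u w} = {x}"
  shows "C = {u}"
proof -
  have "v = u" if v: "v \<in> C" for v
  proof -
    obtain ys where ys: "walk E ys" "hd ys = u" "last ys = v" "x \<notin> set ys"
      using comp_minus_connected[OF C assms(2) v] by blast
    show ?thesis
    proof (cases ys)
      case (Cons a zs)
      then show ?thesis using ys assms(3) by (cases zs) auto
    qed (use ys in simp)
  qed
  then show ?thesis using assms(2) by blast
qed

lemma ancestor_in_comp_minus_iff:
  assumes "comp_minus V E x C" "w \<in> V" "j < depth w"
  shows "ancestor j w \<in> C \<longleftrightarrow> w \<in> C"
  using assms(3)
proof (induction j)
  case (Suc j)
  have "ancestor j w \<noteq> x" "ancestor (Suc j) w \<noteq> x"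
    using ancestor_in_V_depth[OF assms(2), of j] ancestor_in_V_depth[OF assms(2), of "Suc j"] Suc.prems
    by auto
  then show ?case
    using comp_minus_adj_iff[OF assms(1) adj_ancestor_Suc[OF assms(2)]] Suc by simp
qed simp

lemma comp_minus_boundary: "comp_minus V E x C \<Longrightarrow> adj E u v \<Longrightarrow> u \<in> C \<Longrightarrow> v \<notin> C \<Longrightarrow> v = x"
  using comp_minus_adj_closed by blast

lemma gdist_into_comp_minus:
  assumes "comp_minus V E x C" "a \<in> V - C" "z \<in> C"
  shows "gdist E a z = gdist E a x + depth z"
  using gdist_through_cut_vertex[of E a z C x] comp_minus_boundary[OF assms(1)] assms
    comp_minus_subset[OF assms(1)] reachable_in_V unfolding depth_def by blast

lemma ancestor_not_leaf:
  assumes "v \<in> V" "0 < k" "k < depth v"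
  shows "\<not> leaf V E (ancestor k v)"
proof -
  obtain j where k: "k = Suc j" using assms(2) by (cases k) auto
  have "adj E (ancestor k v) (ancestor j v)" "adj E (ancestor k v) (ancestor (Suc k) v)"
    using adj_ancestor_Suc[OF assms(1), of j] adj_ancestor_Suc[OF assms(1), of k] assms k
    by (auto simp: adj_commute[of E "ancestor j v"])
  moreover have "depth (ancestor j v) \<noteq> depth (ancestor (Suc k) v)"
    using ancestor_in_V_depth[OF assms(1), of j] ancestor_in_V_depth[OF assms(1), of "Suc k"] assms k
    by simp
  ultimately show ?thesis using not_leaf_if_two_neighbours by metis
qed

end

section \<open>Broom-shaped components\<close>

text \<open>In the paper's notation
  \<open>broom\<close> is \<open>y\<^sub>i'\<close>, and the vertices \<open>ancestor k broom\<close> with \<open>k < p - 1\<close> form the path from it to the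
  neighbour of \<open>x\<close>.\<close>

locale broom_component = rooted_tree +
  fixes C :: "'a set" and y :: 'a
  assumes component: "comp_minus V E x C"
    and one_broom_vertex: "card {b\<in>C. broom_vertex V E b} = 1"
    and y_in_C: "y \<in> C" and leaf_y: "leaf V E y"
    and root_not_leaf: "\<not> leaf V E x"
begin

definition broom :: 'a where "broom = parent y"
definition p :: nat where "p = depth y"
definition leaves :: "'a set" where "leaves = {z\<in>C. leaf V E z}"

lemma C_subset: "C \<subseteq> V - {x}"
  using comp_minus_subset[OF component] .

lemma finite_C: "finite C"
  using C_subset finite_V finite_subset by blast

lemma y_in_V: "y \<in> V" "y \<noteq> x"
  using y_in_C C_subset by auto

lemma adj_y_broom: "adj E y broom" and depth_broom: "depth broom + 1 = p"
  using parent[OF y_in_V] by (auto simp: broom_def p_def)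

lemma broom_in_V: "broom \<in> V"
  using adjD[OF adj_y_broom] by blast

lemma broom_vertex_unique: "c \<in> C \<Longrightarrow> broom_vertex V E c \<Longrightarrow> c' \<in> C \<Longrightarrow> broom_vertex V E c' \<Longrightarrow> c = c'"
  using one_broom_vertex by (metis (mono_tags, lifting) card_1_singletonE mem_Collect_eq singletonD)

lemma broom_ne_root: "broom \<noteq> x"
proof
  assume "broom = x"
  then have "C = {y}"
    using comp_minus_eq_singleton[OF component y_in_C] leaf_neighbours[OF leaf_y adj_y_broom] by simp
  moreover obtain c where "c \<in> C" "broom_vertex V E c"
    using one_broom_vertex by (metis (mono_tags, lifting) card_1_singletonE mem_Collect_eq singletonI)
  ultimately obtain l where "leaf V E l" "adj E y l" unfolding broom_vertex_def by blast
  then have "l = x" using leaf_neighbours[OF leaf_y adj_y_broom] \<open>broom = x\<close> by auto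
  then show False using \<open>leaf V E l\<close> root_not_leaf by simp
qed

lemma broom_in_C: "broom \<in> C"
  using comp_minus_adj_closed[OF component y_in_C adj_y_broom broom_ne_root] .

lemma broom_is_broom_vertex: "broom_vertex V E broom"
  using broom_in_V leaf_y adj_y_broom adj_commute unfolding broom_vertex_def by metis

lemma p_ge_2: "p \<ge> 2"
  using depth_broom broom_ne_root depth_eq_0D[OF broom_in_V] by fastforce

lemma spine_in_C: "k < p - 1 \<Longrightarrow> ancestor k broom \<in> C"
  using ancestor_in_comp_minus_iff[OF component broom_in_V] broom_in_C depth_broom by simp

lemma depth_spine: "k < p - 1 \<Longrightarrow> depth (ancestor k broom) + k + 1 = p"
  using ancestor_in_V_depth[OF broom_in_V, of k] depth_broom by simp

lemma spine_eq_ancestor_y: "ancestor k broom = ancestor (Suc k) y"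
  by (simp add: ancestor_Suc_parent broom_def)

lemma spine_not_leaf: "k < p - 1 \<Longrightarrow> \<not> leaf V E (ancestor k broom)"
  using ancestor_not_leaf[OF y_in_V(1), of "Suc k"] spine_eq_ancestor_y p_def by simp

lemma mem_C_cases:
  assumes "v \<in> C"
  shows "leaf V E v \<and> parent v = broom \<or> (\<exists>k<p - 1. v = ancestor k broom)"
proof -
  \<comment> \<open>a deepest descendant of v is a leaf in C; its parent is a broom vertex of C, hence the broom\<close>
  have vV: "v \<in> V" "v \<noteq> x" using assms C_subset by auto
  obtain w m where w: "leaf V E w" "depth w = depth v + m" "ancestor m w = v"
    using exists_leaf_descendant[OF vV] .
  have wV: "w \<in> V" using w(1) by (simp add: leaf_def)
  have "depth v \<noteq> 0" using vV depth_eq_0D by blast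
  then have wC: "w \<in> C" using ancestor_in_comp_minus_iff[OF component wV, of m] w assms by simp
  have wx: "w \<noteq> x" using wC C_subset by auto
  have "parent w \<noteq> x"
  proof
    assume "parent w = x"
    then have "C = {w}"
      using comp_minus_eq_singleton[OF component wC] leaf_neighbours[OF w(1) parent(1)[OF wV wx]] by simp
    then show False using y_in_C broom_in_C adjD[OF adj_y_broom] by simp
  qed
  then have "parent w \<in> C" using comp_minus_adj_closed[OF component wC parent(1)[OF wV wx]] by blast
  moreover have "broom_vertex V E (parent w)"
    using parent[OF wV wx] w(1) adjD adj_commute unfolding broom_vertex_def by metis
  ultimately have pw: "parent w = broom" using broom_vertex_unique broom_in_C broom_is_broom_vertex by blast
  show ?thesis
  proof (cases m)
    case 0
    then show ?thesis using w pw by simp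
  next
    case (Suc k)
    have "depth w = p" using parent(2)[OF wV wx] pw depth_broom by simp
    then have "k < p - 1" using w(2) Suc \<open>depth v \<noteq> 0\<close> by simp
    moreover have "v = ancestor k broom" using w(3) pw Suc by (simp add: ancestor_Suc_parent)
    ultimately show ?thesis by blast
  qed
qed

lemma leavesD:
  assumes "z \<in> leaves"
  shows "parent z = broom" "depth z = p" "adj E z broom"
proof -
  have z: "z \<in> C" "leaf V E z" using assms by (auto simp: leaves_def)
  then show pz: "parent z = broom" using mem_C_cases spine_not_leaf by blast
  have "z \<in> V" "z \<noteq> x" using z C_subset by auto
  then show "depth z = p" "adj E z broom" using parent[of z] pz depth_broom by auto
qed

lemma C_eq: "C = (\<lambda>k. ancestor k broom) ` {..<p - 1} \<union> leaves"
  using mem_C_cases spine_in_C leaf_y unfolding leaves_def by auto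

lemma inj_spine: "inj_on (\<lambda>k. ancestor k broom) {..<p - 1}"
proof (rule inj_onI)
  fix i j assume "i \<in> {..<p - 1}" "j \<in> {..<p - 1}" "ancestor i broom = ancestor j broom"
  then show "i = j" using depth_spine[of i] depth_spine[of j] by auto
qed

lemma sum_C: "(\<Sum>z\<in>C. f z) = (\<Sum>k<p - 1. f (ancestor k broom)) + (\<Sum>z\<in>leaves. f z)"
proof -
  have "(\<lambda>k. ancestor k broom) ` {..<p - 1} \<inter> leaves = {}"
    using spine_not_leaf unfolding leaves_def by auto
  moreover have "finite leaves" using finite_C unfolding leaves_def by simp
  ultimately show ?thesis
    using sum.union_disjoint[of "(\<lambda>k. ancestor k broom) ` {..<p - 1}" leaves f]
      sum.reindex[OF inj_spine, of f] C_eq by simp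
qed

lemma int_p_minus_1: "int (p - 1) = int p - 1"
  using p_ge_2 by simp

lemma int_card_C: "int (card C) = int p - 1 + int (card leaves)"
  using sum_C[of "\<lambda>_. 1 :: int"] int_p_minus_1 by simp

lemma gdist_spine:
  "i < p - 1 \<Longrightarrow> j < p - 1 \<Longrightarrow> int (gdist E (ancestor i broom) (ancestor j broom)) = \<bar>int i - int j\<bar>"
  using gdist_ancestors[OF broom_in_V] depth_broom by simp

lemma gdist_leaf_spine:
  assumes "z \<in> leaves" "i < p - 1"
  shows "gdist E z (ancestor i broom) = i + 1"
proof -
  have "z \<in> V" using adjD[OF leavesD(3)[OF assms(1)]] by blast
  then show ?thesis
    using gdist_ancestor[of z "Suc i"] leavesD[OF assms(1)] assms(2) by (simp add: ancestor_Suc_parent)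
qed

lemma gdist_leaves:
  assumes "z \<in> leaves" "z' \<in> leaves"
  shows "gdist E z z' = (if z = z' then 0 else 2)"
proof (cases "z = z'")
  case False
  have "\<not> adj E z z'" using depth_adj leavesD(2) assms by fastforce
  moreover have "adj E broom z'" using leavesD(3)[OF assms(2)] adj_commute by metis
  ultimately show ?thesis using gdist_common_neighbour leavesD(3)[OF assms(1)] False by simp
qed simp

lemma sum_depth: "2 * (\<Sum>z\<in>C. int (depth z)) = int p * (int p - 1) + 2 * int (card leaves) * int p"
proof -
  have "(\<Sum>z\<in>C. int (depth z)) = (\<Sum>k<p - 1. (int p - 1) - int k) + int (card leaves) * int p"
  proof -
    have "int (depth (ancestor k broom)) = int p - 1 - int k" if "k < p - 1" for k
      by (simp add: depth_spine[OF that, symmetric])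
    then show ?thesis unfolding sum_C using leavesD(2) by simp
  qed
  then show ?thesis using double_sum_lessThan_int[of "p - 1"] p_ge_2
    by (simp add: sum_subtractf sum.distrib of_nat_diff algebra_simps)
qed

lemma sum_gdist_broom:
  "2 * (\<Sum>z\<in>C. int (gdist E z broom)) = (int p - 1) * (int p - 2) + 2 * int (card leaves)"
proof -
  have "(\<Sum>z\<in>C. int (gdist E z broom)) = (\<Sum>k<p - 1. int k) + int (card leaves)"
  proof -
    have "gdist E (ancestor k broom) broom = k" if "k < p - 1" for k
      using gdist_ancestor[OF broom_in_V, of k] depth_broom that gdist_commute[of E broom "ancestor k broom"]
      by simp
    moreover have "gdist E z broom = 1" if "z \<in> leaves" for z
      using adjD[OF leavesD(3)[OF that]] by (intro gdist_adj[OF leavesD(3)[OF that]]) auto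
    ultimately show ?thesis unfolding sum_C by simp
  qed
  then show ?thesis using double_sum_lessThan_int[of "p - 1"] p_ge_2 by (simp add: of_nat_diff)
qed

lemma sum_sum_gdist:
  "3 * (\<Sum>z\<in>C. \<Sum>z'\<in>C. int (gdist E z z')) =
     int p * (int p - 1) * (int p - 2) + 3 * int (card leaves) * int p * (int p - 1)
     + 6 * int (card leaves) * (int (card leaves) - 1)"
proof -
  let ?a = "\<lambda>k. ancestor k broom" and ?t = "int (card leaves)"
  have spine_spine: "(\<Sum>i<p - 1. \<Sum>j<p - 1. int (gdist E (?a i) (?a j))) = (\<Sum>i<p - 1. \<Sum>j<p - 1. \<bar>int i - int j\<bar>)"
    by (intro sum.cong refl) (simp add: gdist_spine)
  have spine_leaves: "(\<Sum>i<p - 1. \<Sum>z\<in>leaves. int (gdist E (?a i) z)) = ?t * (\<Sum>i<p - 1. int i + 1)"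
  proof -
    have "gdist E (?a i) z = i + 1" if "i < p - 1" "z \<in> leaves" for i z
      using gdist_leaf_spine[OF that(2,1)] gdist_commute[of E "?a i" z] by simp
    then have "(\<Sum>i<p - 1. \<Sum>z\<in>leaves. int (gdist E (?a i) z)) = (\<Sum>i<p - 1. \<Sum>z\<in>leaves. int i + 1)"
      by (intro sum.cong refl) simp
    then show ?thesis by (simp add: sum_distrib_left mult.commute)
  qed
  have leaves_spine: "(\<Sum>z\<in>leaves. \<Sum>j<p - 1. int (gdist E z (?a j))) = (\<Sum>i<p - 1. \<Sum>z\<in>leaves. int (gdist E (?a i) z))"
    by (subst sum.swap) (simp add: gdist_commute[of E _ "?a _"])
  have leaves_leaves: "(\<Sum>z\<in>leaves. \<Sum>z'\<in>leaves. int (gdist E z z')) = 2 * ?t * (?t - 1)"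
  proof -
    have "(\<Sum>z\<in>leaves. \<Sum>z'\<in>leaves. int (gdist E z z')) = (\<Sum>z\<in>leaves. \<Sum>z'\<in>leaves. if z = z' then 0 else 2)"
      by (intro sum.cong refl) (simp add: gdist_leaves)
    then show ?thesis using sum_sum_off_diagonal[of leaves 2] finite_C by (simp add: leaves_def)
  qed
  have "(\<Sum>z\<in>C. \<Sum>z'\<in>C. int (gdist E z z')) =
      (\<Sum>i<p - 1. \<Sum>j<p - 1. int (gdist E (?a i) (?a j))) + (\<Sum>i<p - 1. \<Sum>z\<in>leaves. int (gdist E (?a i) z))
      + (\<Sum>z\<in>leaves. \<Sum>j<p - 1. int (gdist E z (?a j))) + (\<Sum>z\<in>leaves. \<Sum>z'\<in>leaves. int (gdist E z z'))"
    by (simp only: sum_C sum.distrib add.assoc)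
  also have "\<dots> = (\<Sum>i<p - 1. \<Sum>j<p - 1. \<bar>int i - int j\<bar>)
      + 2 * ?t * ((\<Sum>i<p - 1. int i) + int (p - 1)) + 2 * ?t * (?t - 1)"
    unfolding spine_spine leaves_spine spine_leaves leaves_leaves by (simp add: sum.distrib)
  finally show ?thesis
    using sum_sum_abs_diff_lessThan[of "p - 1"] double_sum_lessThan_int[of "p - 1"]
      int_p_minus_1
    by algebra
qed

end

section \<open>Moving one broom onto the other\<close>

locale broom_pair = rooted_tree +
  fixes T1 :: "'a set" and y1 :: 'a and T2 :: "'a set" and y2 :: 'a
  assumes broom1: "broom_component V E x T1 y1" and broom2: "broom_component V E x T2 y2"
    and components_distinct: "T1 \<noteq> T2" and same_depth: "depth y1 = depth y2"
begin

sublocale B1: broom_component V E x T1 y1 by (rule broom1)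
sublocale B2: broom_component V E x T2 y2 by (rule broom2)

definition moved :: "'a set set" where "moved = move_edges E T2 B1.broom"

lemma same_p: "B2.p = B1.p"
  using same_depth by (simp add: B1.p_def B2.p_def)

lemma broom1_notin_T2: "B1.broom \<notin> T2"
  using comp_minus_disjoint[OF B1.component B2.component components_distinct] B1.broom_in_C by blast

lemma adj_moved_iff:
  "adj moved u v \<longleftrightarrow> adj E u v \<and> u \<notin> T2 \<and> v \<notin> T2 \<or> u = B1.broom \<and> v \<in> T2 \<or> v = B1.broom \<and> u \<in> T2"
proof -
  have "{u, v} \<in> {{B1.broom, z} |z. z \<in> T2} \<longleftrightarrow> u = B1.broom \<and> v \<in> T2 \<or> v = B1.broom \<and> u \<in> T2"
    using broom1_notin_T2 by (auto simp: doubleton_eq_iff)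
  moreover have "{u, v} \<in> {e\<in>E. e \<inter> T2 = {}} \<longleftrightarrow> adj E u v \<and> u \<notin> T2 \<and> v \<notin> T2"
    by (auto simp: adj_def)
  ultimately show ?thesis unfolding moved_def move_edges_def adj_def[of "_ \<union> _"] by blast
qed

lemma walk_moved_iff: "set xs \<inter> T2 = {} \<Longrightarrow> walk moved xs \<longleftrightarrow> walk E xs"
  by (induction xs) (auto simp: walk_Cons_iff adj_moved_iff dest: hd_in_set)

lemma gdist_moved_outside:
  assumes "a \<in> V - T2" "a' \<in> V - T2"
  shows "gdist moved a a' = gdist E a a'" "reachable moved a a'"
proof -
  have cut: "v = x" if "adj E u v" "u \<in> T2" "v \<notin> T2" for u v
    using comp_minus_boundary[OF B2.component] that by blast
  have cut_moved: "v = B1.broom" if "adj moved u v" "u \<in> T2" "v \<notin> T2" for u v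
    using that unfolding adj_moved_iff by blast
  obtain g where g: "walk E g" "hd g = a" "last g = a'" "length g = Suc (gdist E a a')" "distinct g"
    using shortest_walk_exists[OF reachable_in_V] assms by blast
  have "set g \<inter> T2 = {}"
  proof (rule distinct_walk_avoids[OF g(1,5)])
    show "hd g \<notin> T2" "last g \<notin> T2" using g(2,3) assms by auto
  qed (rule cut)
  then have "walk moved g" using walk_moved_iff g(1) by blast
  then show r: "reachable moved a a'" unfolding reachable_def using g(2,3) by blast
  obtain h where h: "walk moved h" "hd h = a" "last h = a'" "length h = Suc (gdist moved a a')" "distinct h"
    using shortest_walk_exists[OF r] by blast
  have "set h \<inter> T2 = {}"
  proof (rule distinct_walk_avoids[OF h(1,5)])
    show "hd h \<notin> T2" "last h \<notin> T2" using h(2,3) assms by auto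
  qed (rule cut_moved)
  then have "walk E h" using walk_moved_iff h(1) by blast
  then have "gdist E a a' \<le> gdist moved a a'" using gdist_le_length[OF _ h(2,3)] h(4) by simp
  moreover have "gdist moved a a' \<le> gdist E a a'"
    using gdist_le_length[OF \<open>walk moved g\<close> g(2,3)] g(4) by simp
  ultimately show "gdist moved a a' = gdist E a a'" by simp
qed

lemma gdist_moved_into:
  assumes a: "a \<in> V - T2" and z: "z \<in> T2"
  shows "gdist moved a z = gdist E a B1.broom + 1"
proof -
  have bA: "B1.broom \<in> V - T2" using B1.broom_in_V broom1_notin_T2 by simp
  have bz: "adj moved B1.broom z" using adj_moved_iff z by simp
  have r: "reachable moved a z" using reachable_trans[OF gdist_moved_outside(2)[OF a bA] reachable_adj[OF bz]] .
  have "gdist moved a z = gdist moved a B1.broom + gdist moved B1.broom z"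
    using gdist_through_cut_vertex[OF r _ z, of B1.broom] a adj_moved_iff by blast
  moreover have "gdist moved B1.broom z = 1" using gdist_adj[OF bz] broom1_notin_T2 z by blast
  ultimately show ?thesis using gdist_moved_outside(1)[OF a bA] by simp
qed

lemma gdist_moved_within:
  assumes "z \<in> T2" "z' \<in> T2"
  shows "gdist moved z z' = (if z = z' then 0 else 2)"
  using gdist_common_neighbour[of moved z B1.broom z'] adj_moved_iff broom1_notin_T2 assms by auto

lemma T2_subset: "T2 \<subseteq> V" and T1_subset: "T1 \<subseteq> V - T2"
  using B2.C_subset B1.C_subset comp_minus_disjoint[OF B1.component B2.component components_distinct]
  by auto

lemma sum_gdist_moved_difference_split:
  "int (\<Sum>u\<in>V. \<Sum>v\<in>V. gdist E u v) - int (\<Sum>u\<in>V. \<Sum>v\<in>V. gdist moved u v) =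
     2 * (int (card T2) * (\<Sum>a\<in>V - T2. int (gdist E a x) - int (gdist E a B1.broom))
          + int (card (V - T2)) * (\<Sum>z\<in>T2. int (depth z) - 1))
     + ((\<Sum>z\<in>T2. \<Sum>z'\<in>T2. int (gdist E z z')) - 2 * int (card T2) * (int (card T2) - 1))"
proof -
  define A where "A = V - T2"
  define D where "D u v = int (gdist E u v) - int (gdist moved u v)" for u v
  define F where "F a = int (gdist E a x) - int (gdist E a B1.broom)" for a
  define G where "G z = int (depth z) - 1" for z
  have fin: "finite A" "finite T2" "A \<inter> T2 = {}" using finite_V B2.finite_C by (auto simp: A_def)
  have "int (\<Sum>u\<in>V. \<Sum>v\<in>V. gdist E u v) - int (\<Sum>u\<in>V. \<Sum>v\<in>V. gdist moved u v)
      = (\<Sum>u\<in>A \<union> T2. \<Sum>v\<in>A \<union> T2. D u v)"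
    using T2_subset by (simp add: D_def A_def of_nat_sum sum_subtractf Un_absorb2)
  also have "\<dots> = 2 * (\<Sum>a\<in>A. \<Sum>z\<in>T2. F a + G z) + (\<Sum>z\<in>T2. \<Sum>z'\<in>T2. D z z')"
  proof -
    have "(\<Sum>a\<in>A. \<Sum>a'\<in>A. D a a') = 0"
      by (intro sum.neutral ballI) (simp add: D_def A_def gdist_moved_outside)
    moreover have "(\<Sum>z\<in>T2. \<Sum>a\<in>A. D z a) = (\<Sum>a\<in>A. \<Sum>z\<in>T2. D a z)"
      by (subst sum.swap) (simp add: D_def gdist_commute[of E _ "_"] gdist_commute[of moved _ "_"])
    moreover have "(\<Sum>a\<in>A. \<Sum>z\<in>T2. D a z) = (\<Sum>a\<in>A. \<Sum>z\<in>T2. F a + G z)"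
      by (intro sum.cong refl)
        (simp add: A_def D_def F_def G_def gdist_into_comp_minus[OF B2.component] gdist_moved_into)
    ultimately show ?thesis by (simp add: sum_sum_Un_disjoint[OF fin])
  qed
  also have "\<dots> = 2 * (int (card T2) * (\<Sum>a\<in>A. F a) + int (card A) * (\<Sum>z\<in>T2. G z))
      + ((\<Sum>z\<in>T2. \<Sum>z'\<in>T2. int (gdist E z z')) - 2 * int (card T2) * (int (card T2) - 1))"
  proof -
    have "(\<Sum>z\<in>T2. \<Sum>z'\<in>T2. D z z') = (\<Sum>z\<in>T2. \<Sum>z'\<in>T2. int (gdist E z z') - (if z = z' then 0 else 2))"
      by (intro sum.cong refl) (simp add: D_def gdist_moved_within)
    then have "(\<Sum>z\<in>T2. \<Sum>z'\<in>T2. D z z') =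
        (\<Sum>z\<in>T2. \<Sum>z'\<in>T2. int (gdist E z z')) - 2 * int (card T2) * (int (card T2) - 1)"
      using sum_sum_off_diagonal[OF fin(2), of 2] by (simp add: sum_subtractf)
    then show ?thesis by (simp add: sum.distrib sum_distrib_left)
  qed
  finally show ?thesis by (simp add: A_def F_def G_def)
qed

lemma sum_outside_T2:
  "(\<Sum>a\<in>V - T2. int (gdist E a x) - int (gdist E a B1.broom)) =
     - int (card (V - T2 - T1)) * (int B1.p - 1)
     + ((\<Sum>a\<in>T1. int (depth a)) - (\<Sum>a\<in>T1. int (gdist E a B1.broom)))"
proof -
  have "int (gdist E a x) - int (gdist E a B1.broom) = - (int B1.p - 1)" if "a \<in> V - T2 - T1" for a
    using gdist_into_comp_minus[OF B1.component _ B1.broom_in_C, of a] that B1.depth_broom by simp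
  then have "(\<Sum>a\<in>V - T2 - T1. int (gdist E a x) - int (gdist E a B1.broom)) = (\<Sum>a\<in>V - T2 - T1. - (int B1.p - 1))"
    by (rule sum.cong[OF refl])
  then have "(\<Sum>a\<in>V - T2 - T1. int (gdist E a x) - int (gdist E a B1.broom)) = - int (card (V - T2 - T1)) * (int B1.p - 1)"
    by (simp add: algebra_simps)
  moreover have "(\<Sum>a\<in>T1. int (gdist E a x) - int (gdist E a B1.broom))
      = (\<Sum>a\<in>T1. int (depth a)) - (\<Sum>a\<in>T1. int (gdist E a B1.broom))"
    by (simp add: depth_def gdist_commute[of E _ x] sum_subtractf)
  ultimately show ?thesis
    using sum.subset_diff[OF T1_subset, of "\<lambda>a. int (gdist E a x) - int (gdist E a B1.broom)"] finite_V
    by simp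
qed

lemma sum_gdist_moved_difference:
  "3 * (int (\<Sum>u\<in>V. \<Sum>v\<in>V. gdist E u v) - int (\<Sum>u\<in>V. \<Sum>v\<in>V. gdist moved u v)) =
   (int B1.p - 1) * (12 * (int B1.p + int (card B2.leaves) - 1) * (int (card B1.leaves) - 1)
      - int B1.p * (3 * int (card V) + 5 - 12 * int (card B2.leaves) - 10 * int B1.p))"
proof -
  have "int (card (V - T2)) = int (card V) - int (card T2)"
    using card_Diff_subset[OF B2.finite_C T2_subset] card_mono[OF finite_V T2_subset] by (simp add: of_nat_diff)
  moreover have "int (card (V - T2 - T1)) = int (card (V - T2)) - int (card T1)"
    using card_Diff_subset[OF B1.finite_C T1_subset] card_mono[OF _ T1_subset] finite_V
    by (simp add: of_nat_diff)
  moreover have "(\<Sum>z\<in>T2. int (depth z) - 1) = (\<Sum>z\<in>T2. int (depth z)) - int (card T2)"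
    by (simp add: sum_subtractf)
  ultimately show ?thesis
    unfolding sum_gdist_moved_difference_split sum_outside_T2
    using B1.sum_depth B1.sum_gdist_broom B1.int_card_C
      B2.sum_depth[unfolded same_p] B2.sum_sum_gdist[unfolded same_p] B2.int_card_C[unfolded same_p]
    by algebra
qed

end

lemma wiener_le_wiener_iff:
  assumes "finite V"
  shows "wiener V E' \<le> wiener V E \<longleftrightarrow> (\<Sum>u\<in>V. \<Sum>v\<in>V. gdist E' u v) \<le> (\<Sum>u\<in>V. \<Sum>v\<in>V. gdist E u v)"
proof -
  have even: "even (\<Sum>u\<in>V. \<Sum>v\<in>V. gdist G u v)" for G
    by (rule sum_sum_even[OF assms]) (simp_all add: gdist_commute[of G])
  show ?thesis unfolding wiener_def using even[of E] even[of E'] by (auto elim!: evenE)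
qed

lemma broom_pair_if_special_witness:
  assumes "tree V E" "special_vertex V E x" "special_witness V E x T1 T2"
    and "y1 \<in> T1" "leaf V E y1" "y2 \<in> T2" "leaf V E y2" "gdist E x y1 = gdist E x y2"
  shows "broom_pair V E x T1 y1 T2 y2"
proof -
  have rooted: "rooted_tree V E x"
    using assms(1,2) unfolding rooted_tree_def special_vertex_def by blast
  have "\<not> leaf V E x" using assms(2) unfolding special_vertex_def leaf_def by auto
  then have "broom_component V E x T1 y1" "broom_component V E x T2 y2"
    using rooted assms(3-7)
    unfolding broom_component_def broom_component_axioms_def special_witness_def by auto
  then show ?thesis
    using rooted assms(3,8)
    unfolding broom_pair_def broom_pair_axioms_def special_witness_def rooted_tree.depth_def[OF rooted]
    by auto
qed

lemma difference_nonneg_iff_bound: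
  fixes n p t1 t2 :: nat
  assumes "p \<ge> 2"
  shows "0 \<le> (int p - 1) * (12 * (int p + int t2 - 1) * (int t1 - 1)
            - int p * (3 * int n + 5 - 12 * int t2 - 10 * int p)) \<longleftrightarrow>
         real t1 - 1 \<ge> real p * (3 * real n + 5 - 12 * real t2 - 10 * real p) / (12 * (real p + real t2 - 1))"
proof -
  define X where "X = 12 * (int p + int t2 - 1) * (int t1 - 1) - int p * (3 * int n + 5 - 12 * int t2 - 10 * int p)"
  have "real_of_int X = (real t1 - 1) * (12 * (real p + real t2 - 1)) - real p * (3 * real n + 5 - 12 * real t2 - 10 * real p)"
    by (simp add: X_def algebra_simps)
  then have "0 \<le> X \<longleftrightarrow> real p * (3 * real n + 5 - 12 * real t2 - 10 * real p) \<le> (real t1 - 1) * (12 * (real p + real t2 - 1))"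
    by (metis of_int_0_le_iff diff_ge_0_iff_ge)
  also have "\<dots> \<longleftrightarrow> real t1 - 1 \<ge> real p * (3 * real n + 5 - 12 * real t2 - 10 * real p) / (12 * (real p + real t2 - 1))"
    using assms by (intro pos_divide_le_eq[symmetric]) simp
  finally show ?thesis using assms by (simp add: X_def zero_le_mult_iff)
qed

theorem mainTheorem5:
  fixes V :: "'a set" and E :: "'a set set" and x y1 y2 y1' :: 'a and T1 T2 :: "'a set"
    and n d p t1 t2 :: nat
  assumes "max_wiener_tree V E"
    and "card V = n" and "diameter V E = d"
    and "special_vertex V E x"
    and "special_witness V E x T1 T2"
    and "y1 \<in> T1" and "leaf V E y1" and "y2 \<in> T2" and "leaf V E y2"
    and "broom_vertex V E y1'" and "adj E y1' y1"
    and "p = gdist E x y1" and "p = gdist E x y2"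
    and "t1 = card {y\<in>T1. leaf V E y}" and "t2 = card {y\<in>T2. leaf V E y}"
  shows "wiener V (move_edges E T2 y1') \<le> wiener V E \<longleftrightarrow>
         real t1 - 1 \<ge> real p * (3 * real n + 5 - 12 * real t2 - 10 * real p)
                          / (12 * (real p + real t2 - 1))"
proof -
  interpret broom_pair V E x T1 y1 T2 y2
    by (rule broom_pair_if_special_witness) (use assms in \<open>auto simp: max_wiener_tree_def\<close>)
  have "y1' = B1.broom"
    using leaf_neighbours[OF assms(7)] assms(11) B1.adj_y_broom adj_commute[of E y1' y1] by blast
  then have moved: "move_edges E T2 y1' = moved" by (simp add: moved_def)
  have p: "p = B1.p" and t: "t1 = card B1.leaves" "t2 = card B2.leaves"
    using assms(12,14,15) by (simp_all add: B1.p_def depth_def B1.leaves_def B2.leaves_def)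
  have "wiener V (move_edges E T2 y1') \<le> wiener V E \<longleftrightarrow>
      0 \<le> 3 * (int (\<Sum>u\<in>V. \<Sum>v\<in>V. gdist E u v) - int (\<Sum>u\<in>V. \<Sum>v\<in>V. gdist moved u v))"
    unfolding moved wiener_le_wiener_iff[OF finite_V] by (simp del: of_nat_sum)
  also have "\<dots> \<longleftrightarrow> real t1 - 1 \<ge> real p * (3 * real n + 5 - 12 * real t2 - 10 * real p)
                          / (12 * (real p + real t2 - 1))"
    unfolding sum_gdist_moved_difference p t assms(2) using B1.p_ge_2 by (rule difference_nonneg_iff_bound)
  finally show ?thesis .
qed

end
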